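(* (Sharpness of Theorem 2.1 at real points.) Let $-1\le B<A\le 1$, let $\Phi$, $S$ be as below, and let $z_0\in(-1,1)$ be real. (a) If $(A,B)\in E_1\cup E_2$, or if $(A,B)\in E_3$ and $z_0\in S$, then there exists $f\in\mathcal{C}(A,B)$ with $|S_f(z_0)|=\Phi(z_0)$. Explicitly, one may take $f$ defined by $1+\frac{zf''(z)}{f'(z)}=\frac{1+A\phi(z)}{1+B\phi(z)}$ with $\phi(z)=\frac{pz(z-b)}{1-bz}$, where $(p,q)=(1,1)$ if $A+B\le 0$, $(p,q)=(-1,1)$ if $A+B>0,B\ge 0$, $(p,q)=(-1,-1)$ if $A+B>0,B<0$, and $b=\dfrac{z_0(2-2q|B|-|A+B|(1-z_0^2))}{2-2q|B|z_0^2-|A+B|(1-z_0^2)}\in(-1,1)$. (b) If $(A,B)\in E_3$, $z_0\notin S$, and either $B>0,\ z_0\le 0$ or $B<0,\ z_0\ge 0$, then the function $K_{A,B}$ satisfies $|S_{K_{A,B}}(z_0)|=\dfrac{|A^2-B^2|}{2(1-|B||z_0|)^2}$.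
   Context: $\mathbb{D}$ is the unit disk; $\mathcal{C}(A,B)$ for $-1\le B<A\le1$ is the set of analytic $f$ on $\mathbb{D}$ with $f(0)=0,f'(0)=1$, $f'\ne0$, and $1+zf''/f'\prec(1+Az)/(1+Bz)$ (subordination: equals $(1+A\omega)/(1+B\omega)$ for some analytic $\omega:\mathbb{D}\to\mathbb{D}$, $\omega(0)=0$). $S_f=(f''/f')'-\frac12(f''/f')^2$. $E=\{(A,B):-1\le B<A\le1\}$; $E_1=\{(A,B)\in E:1-\sqrt{1-B^2}<|A+B|<1+\sqrt{1-B^2}\}$, $E_2=\{(A,B)\in E:|A+B|\le 1-\sqrt{1-B^2},\ |A+B|\le|B|\}$, $E_3=\{(A,B)\in E:|A+B|\ge 1+\sqrt{1-B^2},\ |A+B|>|B|\}$. $\Phi(z)=\frac{(A-B)(2-|A+B|(1-|z|^2))}{(1-|z|^2)(2-|A+B|(1-|z|^2)-2B^2|z|^2)}$. For $(A,B)\in E_3$, $\delta_{1,2}=\frac{|B|\mp\sqrt{B^2-|A+B|(2-|A+B|)}}{|A+B|}$ and $S=\{z:|z|<\delta_1\text{ or }|z|>\delta_2\}$. $K_{A,B}(z)=\frac1A\{(1+Bz)^{A/B}-1\}$ if $A\ne0,B\ne0$; $\frac1B\log(1+Bz)$ if $A=0$; $\frac1A(e^{Az}-1)$ if $B=0$; it lies in $\mathcal{C}(A,B)$ and $S_{K_{A,B}}(z)=-\frac{A^2-B^2}{2(1+Bz)^2}$. *)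

theory Defs
  imports "HOL-Analysis.Analysis"
begin

definition schwarzian :: "(complex \<Rightarrow> complex) \<Rightarrow> complex \<Rightarrow> complex" where
  "schwarzian f z =
     deriv (\<lambda>w. deriv (deriv f) w / deriv f w) z
     - (1/2) * (deriv (deriv f) z / deriv f z)^2"

definition classC :: "real \<Rightarrow> real \<Rightarrow> (complex \<Rightarrow> complex) set" where
  "classC A B = {f. f holomorphic_on ball 0 1 \<and> f 0 = 0 \<and> deriv f 0 = 1 \<and>
      (\<forall>z\<in>ball 0 1. deriv f z \<noteq> 0) \<and>
      (\<exists>\<omega>. \<omega> holomorphic_on ball 0 1 \<and> \<omega> 0 = 0 \<and> (\<forall>z\<in>ball 0 1. \<omega> z \<in> ball 0 1) \<and>
         (\<forall>z\<in>ball 0 1. 1 + z * deriv (deriv f) z / deriv f z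
                 = (1 + of_real A * \<omega> z) / (1 + of_real B * \<omega> z)))}"

definition Eset :: "(real \<times> real) set" where
  "Eset = {(A, B). -1 \<le> B \<and> B < A \<and> A \<le> 1}"

definition E1 :: "(real \<times> real) set" where
  "E1 = {(A, B). (A, B) \<in> Eset \<and> 1 - sqrt (1 - B^2) < \<bar>A + B\<bar> \<and> \<bar>A + B\<bar> < 1 + sqrt (1 - B^2)}"

definition E2 :: "(real \<times> real) set" where
  "E2 = {(A, B). (A, B) \<in> Eset \<and> \<bar>A + B\<bar> \<le> 1 - sqrt (1 - B^2) \<and> \<bar>A + B\<bar> \<le> \<bar>B\<bar>}"

definition E3 :: "(real \<times> real) set" where
  "E3 = {(A, B). (A, B) \<in> Eset \<and> \<bar>A + B\<bar> \<ge> 1 + sqrt (1 - B^2) \<and> \<bar>A + B\<bar> > \<bar>B\<bar>}"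

definition Phi :: "real \<Rightarrow> real \<Rightarrow> complex \<Rightarrow> real" where
  "Phi A B z = (A - B) * (2 - \<bar>A + B\<bar> * (1 - (cmod z)^2)) /
      ((1 - (cmod z)^2) * (2 - \<bar>A + B\<bar> * (1 - (cmod z)^2) - 2 * B^2 * (cmod z)^2))"

definition delta1 :: "real \<Rightarrow> real \<Rightarrow> real" where
  "delta1 A B = (\<bar>B\<bar> - sqrt (B^2 - \<bar>A + B\<bar> * (2 - \<bar>A + B\<bar>))) / \<bar>A + B\<bar>"

definition delta2 :: "real \<Rightarrow> real \<Rightarrow> real" where
  "delta2 A B = (\<bar>B\<bar> + sqrt (B^2 - \<bar>A + B\<bar> * (2 - \<bar>A + B\<bar>))) / \<bar>A + B\<bar>"

definition Sset :: "real \<Rightarrow> real \<Rightarrow> complex set" where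
  "Sset A B = {z. cmod z < delta1 A B \<or> cmod z > delta2 A B}"

definition KAB :: "real \<Rightarrow> real \<Rightarrow> complex \<Rightarrow> complex" where
  "KAB A B z =
     (if A \<noteq> 0 \<and> B \<noteq> 0 then (1 / of_real A) * ((1 + of_real B * z) powr (of_real (A / B)) - 1)
      else if A = 0 then (1 / of_real B) * Ln (1 + of_real B * z)
      else (1 / of_real A) * (exp (of_real A * z) - 1))"

definition par_p :: "real \<Rightarrow> real \<Rightarrow> real" where
  "par_p A B = (if A + B \<le> 0 then 1 else -1)"

definition par_q :: "real \<Rightarrow> real \<Rightarrow> real" where
  "par_q A B = (if A + B \<le> 0 then 1 else if B \<ge> 0 then 1 else -1)"

definition par_b :: "real \<Rightarrow> real \<Rightarrow> real \<Rightarrow> real" where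
  "par_b A B z0 =
     z0 * (2 - 2 * par_q A B * \<bar>B\<bar> - \<bar>A + B\<bar> * (1 - z0^2)) /
       (2 - 2 * par_q A B * \<bar>B\<bar> * z0^2 - \<bar>A + B\<bar> * (1 - z0^2))"

definition ext_phi :: "real \<Rightarrow> real \<Rightarrow> real \<Rightarrow> complex \<Rightarrow> complex" where
  "ext_phi A B z0 z =
     of_real (par_p A B) * z * (z - of_real (par_b A B z0)) / (1 - of_real (par_b A B z0) * z)"

end

(*
  The extremal functions are built from their pre-Schwarzian f''/f'.  For a Schwarz function
  \<omega>(z) = z \<psi>(z), integrating f''/f' = (A - B) \<psi> / (1 + B \<omega>) twice on the disk gives a member
  of C(A,B) realising \<omega>, and S_f = (f''/f')' - (f''/f')^2/2.  For \<omega> = p z (z - b)/(1 - b z) the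
  pre-Schwarzian is the rational function p (A - B)(z - b)/(1 - b z + p B z (z - b)), and the
  choice of b makes S_f(z0) = \<plusminus>\<Phi>(z0), a rational identity in z0.  The hypotheses on (A,B) and z0
  in part (a) all amount to 2|B||z0| < 2 - |A+B|(1 - z0^2), which is exactly what keeps the
  denominator of b positive and |b| < 1.  In part (b), K''/K' = (A - B)/(1 + B z), and the sign
  conditions give 1 + B z0 = 1 - |B||z0|.
*)

theory Submission
  imports Defs "HOL-Complex_Analysis.Complex_Analysis"
begin

lemma deriv_cong_open:
  assumes "open S" "z \<in> S" "\<And>w. w \<in> S \<Longrightarrow> f w = g w"
  shows "deriv f z = deriv g z"
  using eventually_nhds_in_open[OF assms(1,2)]
  by (intro deriv_cong_ev) (auto elim!: eventually_mono intro: assms(3))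

lemma holomorphic_primitive_vanishing_at:
  fixes g :: "complex \<Rightarrow> complex"
  assumes "convex S" "open S" "g holomorphic_on S"
  obtains F where "F a = 0" "\<And>z. z \<in> S \<Longrightarrow> (F has_field_derivative g z) (at z)"
proof -
  obtain F0 where F0: "\<And>z. z \<in> S \<Longrightarrow> (F0 has_field_derivative g z) (at z within S)"
    using holomorphic_convex_primitive'[OF assms] by blast
  show ?thesis
  proof (rule that[of "\<lambda>z. F0 z - F0 a"])
    fix z assume "z \<in> S"
    with F0[OF this] show "((\<lambda>z. F0 z - F0 a) has_field_derivative g z) (at z)"
      by (auto intro!: derivative_eq_intros simp: at_within_open[OF _ \<open>open S\<close>])
  qed simp
qed

lemma deriv_quotient_minus_half_square:
  fixes N D :: "complex \<Rightarrow> complex"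
  assumes "(N has_field_derivative N') (at z)" "(D has_field_derivative D') (at z)" "D z \<noteq> 0"
  shows "deriv (\<lambda>w. N w / D w) z - (N z / D z)^2 / 2
           = (2 * (N' * D z - N z * D') - (N z)^2) / (2 * (D z)^2)"
proof -
  have "deriv (\<lambda>w. N w / D w) z = (N' * D z - N z * D') / (D z)^2"
    using assms by (intro DERIV_imp_deriv) (auto intro!: derivative_eq_intros simp: power2_eq_square)
  then show ?thesis
    using assms(3) by (simp only:) (simp add: field_simps power2_eq_square)
qed

lemma norm_blaschke_factor_less_1:
  fixes b z :: complex
  assumes "cmod b < 1" "cmod z < 1"
  shows "cmod (z - b) < cmod (1 - cnj b * z)"
proof -
  have gap: "(cmod (1 - cnj b * z))^2 - (cmod (z - b))^2 = (1 - (cmod b)^2) * (1 - (cmod z)^2)"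
    by (simp only: cmod_power2) (simp add: power2_eq_square algebra_simps)
  have "0 < (1 - (cmod b)^2) * (1 - (cmod z)^2)"
    using assms by (simp add: power_less_one_iff)
  then show ?thesis
    using gap by (simp add: power2_less_imp_less)
qed

lemma one_plus_of_real_mult_nonzero:
  fixes B :: real and w :: complex
  assumes "\<bar>B\<bar> \<le> 1" "cmod w < 1"
  shows "1 + of_real B * w \<noteq> 0"
proof
  assume "1 + of_real B * w = 0"
  then have "cmod (of_real B * w) = 1"
    by (metis add_eq_0_iff norm_minus_cancel norm_one)
  moreover have "\<bar>B\<bar> * cmod w < 1"
    using assms by (smt (verit) mult_left_le_one_le norm_ge_zero)
  ultimately show False
    by (simp add: norm_mult)
qed

lemma schwarzian_eq_of_pre_schwarzian:
  assumes "open S" "z \<in> S" "\<And>w. w \<in> S \<Longrightarrow> deriv (deriv f) w / deriv f w = g w"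
  shows "schwarzian f z = deriv g z - (g z)^2 / 2"
proof -
  have "deriv (\<lambda>w. deriv (deriv f) w / deriv f w) z = deriv g z"
    using assms by (rule deriv_cong_open)
  then show ?thesis
    unfolding schwarzian_def assms(3)[OF assms(2)] by simp
qed

lemma classC_exists_with_pre_schwarzian:
  fixes A B :: real and \<psi> :: "complex \<Rightarrow> complex"
  assumes hol: "\<psi> holomorphic_on ball 0 1"
    and self_map: "\<And>z. z \<in> ball 0 1 \<Longrightarrow> cmod (z * \<psi> z) < 1"
    and B: "\<bar>B\<bar> \<le> 1"
  shows "\<exists>f\<in>classC A B. \<forall>z\<in>ball 0 1.
           deriv (deriv f) z / deriv f z = of_real (A - B) * \<psi> z / (1 + of_real B * (z * \<psi> z))
         \<and> 1 + z * deriv (deriv f) z / deriv f z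
             = (1 + of_real A * (z * \<psi> z)) / (1 + of_real B * (z * \<psi> z))"
proof -
  define \<omega> where "\<omega> z = z * \<psi> z" for z
  define g where "g z = of_real (A - B) * \<psi> z / (1 + of_real B * \<omega> z)" for z
  have denom_nz: "1 + of_real B * \<omega> z \<noteq> 0" if "z \<in> ball 0 1" for z
    using B self_map[OF that] unfolding \<omega>_def by (rule one_plus_of_real_mult_nonzero)
  have "g holomorphic_on ball 0 1"
    unfolding g_def \<omega>_def using hol denom_nz by (auto intro!: holomorphic_intros simp: \<omega>_def)
  then obtain H where H0: "H 0 = 0" and H: "\<And>z. z \<in> ball 0 1 \<Longrightarrow> (H has_field_derivative g z) (at z)"
    using holomorphic_primitive_vanishing_at[OF convex_ball open_ball] by metis
  have expH: "((\<lambda>w. exp (H w)) has_field_derivative exp (H z) * g z) (at z)" if "z \<in> ball 0 1" for z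
    using H[OF that] by (auto intro!: derivative_eq_intros)
  then have "(\<lambda>w. exp (H w)) holomorphic_on ball 0 1"
    by (metis holomorphic_on_open open_ball)
  then obtain f where f0: "f 0 = 0" and f: "\<And>z. z \<in> ball 0 1 \<Longrightarrow> (f has_field_derivative exp (H z)) (at z)"
    using holomorphic_primitive_vanishing_at[OF convex_ball open_ball] by metis
  have f': "deriv f z = exp (H z)" if "z \<in> ball 0 1" for z
    using f[OF that] by (rule DERIV_imp_deriv)
  have f'': "deriv (deriv f) z = exp (H z) * g z" if "z \<in> ball 0 1" for z
    using deriv_cong_open[OF open_ball that f'] DERIV_imp_deriv[OF expH[OF that]] by simp
  have pre: "deriv (deriv f) z / deriv f z = g z" if "z \<in> ball 0 1" for z
    using f'[OF that] f''[OF that] by simp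
  have ident: "1 + z * deriv (deriv f) z / deriv f z = (1 + of_real A * \<omega> z) / (1 + of_real B * \<omega> z)"
    if "z \<in> ball 0 1" for z
  proof -
    have "1 + z * deriv (deriv f) z / deriv f z = 1 + z * g z"
      using pre[OF that] by (metis times_divide_eq_right)
    also have "\<dots> = (1 + of_real A * \<omega> z) / (1 + of_real B * \<omega> z)"
      using denom_nz[OF that] by (simp add: g_def \<omega>_def field_simps)
    finally show ?thesis .
  qed
  have "f \<in> classC A B"
    unfolding classC_def
  proof (intro CollectI conjI exI ballI)
    show "f holomorphic_on ball 0 1"
      using f by (metis holomorphic_on_open open_ball)
    show "deriv f 0 = 1" using f'[of 0] H0 by simp
    show "\<omega> holomorphic_on ball 0 1"
      unfolding \<omega>_def using hol by (auto intro!: holomorphic_intros)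
    show "\<omega> z \<in> ball 0 1" if "z \<in> ball 0 1" for z
      using self_map[OF that] by (simp add: \<omega>_def)
  qed (use f0 f' ident in \<open>auto simp: \<omega>_def\<close>)
  with pre ident show ?thesis
    unfolding g_def \<omega>_def by blast
qed

lemma KAB_pre_schwarzian:
  fixes A B :: real
  assumes A: "A \<noteq> 0" and B: "B \<noteq> 0" "\<bar>B\<bar> \<le> 1" and z: "z \<in> ball 0 1"
  shows "deriv (deriv (KAB A B)) z / deriv (KAB A B) z = of_real (A - B) / (1 + of_real B * z)"
proof -
  define a where "a = complex_of_real (A / B)"
  define W where "W w = 1 + of_real B * w" for w :: complex
  have KAB: "KAB A B = (\<lambda>w. (W w powr a - 1) / of_real A)"
    by (rule ext) (simp add: KAB_def A B W_def a_def)
  have W_pos: "Re (W w) > 0" if "w \<in> ball 0 1" for w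
  proof -
    have "\<bar>B * Re w\<bar> < 1"
      using B(2) abs_Re_le_cmod[of w] that
      by (simp add: abs_mult) (smt (verit) mult_left_le_one_le abs_ge_zero)
    then show ?thesis by (simp add: W_def)
  qed
  then have W_slit: "W w \<notin> \<real>\<^sub>\<le>\<^sub>0" and W_nz: "W w \<noteq> 0" if "w \<in> ball 0 1" for w
    using W_pos[OF that] by (auto simp: complex_nonpos_Reals_iff)
  have a_B: "a * of_real B = of_real A"
    using B(1) by (simp add: a_def field_simps)
  have K': "deriv (KAB A B) w = W w powr (a - 1)" if "w \<in> ball 0 1" for w
  proof (rule DERIV_imp_deriv)
    show "(KAB A B has_field_derivative W w powr (a - 1)) (at w)"
      unfolding KAB W_def using W_slit[OF that] A a_B
      by (auto intro!: derivative_eq_intros simp: W_def field_simps)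
  qed
  have "deriv (deriv (KAB A B)) z = deriv (\<lambda>w. W w powr (a - 1)) z"
    using open_ball z K' by (rule deriv_cong_open)
  also have "\<dots> = (a - 1) * W z powr (a - 1 - 1) * of_real B"
    unfolding W_def using W_slit[OF z]
    by (intro DERIV_imp_deriv) (auto intro!: derivative_eq_intros simp: W_def)
  also have "\<dots> = (of_real A - of_real B) * W z powr (a - 1) / W z"
    using powr_diff[of "W z" "a - 1" 1] a_B by (simp add: algebra_simps)
  finally have K'': "deriv (deriv (KAB A B)) z = (of_real A - of_real B) * W z powr (a - 1) / W z" .
  show ?thesis
    using W_nz[OF z] unfolding K'' K'[OF z] by (simp add: W_def)
qed

lemma schwarzian_KAB:
  fixes A B :: real
  assumes "A \<noteq> 0" "B \<noteq> 0" "\<bar>B\<bar> \<le> 1" and z: "z \<in> ball 0 1"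
  shows "schwarzian (KAB A B) z = - of_real (A^2 - B^2) / (2 * (1 + of_real B * z)^2)"
proof -
  have nz: "1 + of_real B * z \<noteq> 0"
    using assms(3) z by (intro one_plus_of_real_mult_nonzero) auto
  have "schwarzian (KAB A B) z = deriv (\<lambda>w. of_real (A - B) / (1 + of_real B * w)) z
                                  - (of_real (A - B) / (1 + of_real B * z))^2 / 2"
    using open_ball z KAB_pre_schwarzian[OF assms(1-3)] by (rule schwarzian_eq_of_pre_schwarzian)
  also have "\<dots> = (2 * (0 * (1 + of_real B * z) - of_real (A - B) * of_real B) - (of_real (A - B))^2)
                    / (2 * (1 + of_real B * z)^2)"
    using nz by (intro deriv_quotient_minus_half_square) (auto intro!: derivative_eq_intros)
  also have "\<dots> = - of_real (A^2 - B^2) / (2 * (1 + of_real B * z)^2)"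
    by (simp add: power2_eq_square algebra_simps)
  finally show ?thesis .
qed

lemma norm_scaled_blaschke_product_less_1:
  fixes p b :: real and z :: complex
  assumes "\<bar>p\<bar> \<le> 1" "\<bar>b\<bar> < 1" "cmod z < 1"
  shows "cmod (of_real p * z * (z - of_real b) / (1 - of_real b * z)) < 1"
proof -
  have "cmod (z - of_real b) < cmod (1 - of_real b * z)"
    using norm_blaschke_factor_less_1[of "of_real b" z] assms(2,3) by simp
  then have "cmod (z - of_real b) / cmod (1 - of_real b * z) < 1"
    by (simp add: divide_less_eq)
  moreover have "\<bar>p\<bar> * cmod z < 1"
    using assms(1,3) by (smt (verit) mult_left_le_one_le norm_ge_zero)
  ultimately have "(\<bar>p\<bar> * cmod z) * (cmod (z - of_real b) / cmod (1 - of_real b * z)) < 1"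
    by (smt (verit) mult_left_le_one_le mult_nonneg_nonneg abs_ge_zero norm_ge_zero divide_nonneg_nonneg)
  then show ?thesis
    by (simp add: norm_mult norm_divide)
qed

lemma extremal_schwarzian_at_real:
  fixes A B b p z0 c t :: real
  defines "D \<equiv> 1 - b*z0 - t*z0*(z0 - b)"
  assumes c: "c = p*(A - B)" and t: "t = -p*B"
    and b: "\<bar>b\<bar> < 1" and B: "\<bar>B\<bar> \<le> 1" and p: "\<bar>p\<bar> \<le> 1" and z0: "\<bar>z0\<bar> < 1"
  shows "\<exists>f\<in>classC A B.
      (\<forall>z\<in>ball 0 1. 1 + z * deriv (deriv f) z / deriv f z
          = (1 + of_real A * (of_real p * z * (z - of_real b) / (1 - of_real b * z)))
          / (1 + of_real B * (of_real p * z * (z - of_real b) / (1 - of_real b * z))))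
    \<and> schwarzian f (of_real z0)
          = of_real ((2*(c*D - c*(z0 - b)*(-b - t*(2*z0 - b))) - (c*(z0 - b))^2) / (2*D^2))"
proof -
  define \<psi> where "\<psi> z = of_real p * (z - of_real b) / (1 - of_real b * z)" for z :: complex
  have blaschke_nz: "1 - of_real b * z \<noteq> 0" if "z \<in> ball 0 1" for z :: complex
    using one_plus_of_real_mult_nonzero[of "-b" z] b that by simp
  have z\<psi>: "z * \<psi> z = of_real p * z * (z - of_real b) / (1 - of_real b * z)" for z
    by (simp add: \<psi>_def)
  have self_map: "cmod (z * \<psi> z) < 1" if "z \<in> ball 0 1" for z
    unfolding z\<psi> using p b that by (intro norm_scaled_blaschke_product_less_1) auto
  have "\<psi> holomorphic_on ball 0 1"
    unfolding \<psi>_def using blaschke_nz by (auto intro!: holomorphic_intros)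
  then obtain f where f: "f \<in> classC A B"
    and pre: "\<And>z. z \<in> ball 0 1 \<Longrightarrow> deriv (deriv f) z / deriv f z
                = of_real (A - B) * \<psi> z / (1 + of_real B * (z * \<psi> z))"
    and ident: "\<And>z. z \<in> ball 0 1 \<Longrightarrow> 1 + z * deriv (deriv f) z / deriv f z
                = (1 + of_real A * (z * \<psi> z)) / (1 + of_real B * (z * \<psi> z))"
    using classC_exists_with_pre_schwarzian[OF _ self_map B] by metis
  define Dc where "Dc w = 1 - of_real b * w - of_real t * w * (w - of_real b)" for w :: complex
  have Dc_factor: "Dc z = (1 - of_real b * z) * (1 + of_real B * (z * \<psi> z))" if "z \<in> ball 0 1" for z
    using blaschke_nz[OF that] by (simp add: Dc_def \<psi>_def t field_simps)
  have Dc_nz: "Dc z \<noteq> 0" if "z \<in> ball 0 1" for z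
    unfolding Dc_factor[OF that]
    using blaschke_nz[OF that] one_plus_of_real_mult_nonzero[OF B self_map[OF that]] by simp
  have pre': "deriv (deriv f) z / deriv f z = of_real c * (z - of_real b) / Dc z" if "z \<in> ball 0 1" for z
    unfolding pre[OF that] Dc_factor[OF that] using blaschke_nz[OF that]
    by (simp add: \<psi>_def c field_simps)
  have z0_ball: "of_real z0 \<in> ball (0::complex) 1"
    using z0 by simp
  have "schwarzian f (of_real z0)
          = deriv (\<lambda>w. of_real c * (w - of_real b) / Dc w) (of_real z0)
            - (of_real c * (of_real z0 - of_real b) / Dc (of_real z0))^2 / 2"
    using open_ball z0_ball pre' by (rule schwarzian_eq_of_pre_schwarzian)
  also have "\<dots> = (2 * (of_real c * Dc (of_real z0) - of_real c * (of_real z0 - of_real b)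
                        * (- of_real b - of_real t * (2 * of_real z0 - of_real b)))
                     - (of_real c * (of_real z0 - of_real b))^2) / (2 * (Dc (of_real z0))^2)"
    using Dc_nz[OF z0_ball] unfolding Dc_def
    by (intro deriv_quotient_minus_half_square) (auto intro!: derivative_eq_intros simp: algebra_simps)
  also have "\<dots> = of_real ((2*(c*D - c*(z0 - b)*(-b - t*(2*z0 - b))) - (c*(z0 - b))^2) / (2*D^2))"
    by (simp add: Dc_def D_def)
  finally show ?thesis
    using f ident unfolding z\<psi> by blast
qed

(* The left-hand side is g' - g^2/2 at z for g(w) = (2t - s)(w - b)/(1 - b w - t w (w - b)). *)
lemma extremal_pre_schwarzian_value:
  fixes s t z b :: real
  defines "M \<equiv> 2 - 2*t*z^2 - s*(1 - z^2)"
    and "Q \<equiv> 2 - s*(1 - z^2) - 2*t^2*z^2"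
    and "D \<equiv> 1 - b*z - t*z*(z - b)"
  assumes M: "M \<noteq> 0" and z: "z^2 \<noteq> 1" and Q: "Q \<noteq> 0"
    and b: "b = z*(2 - 2*t - s*(1 - z^2)) / M"
  shows "(2*((2*t - s)*D - (2*t - s)*(z - b)*(-b - t*(2*z - b))) - ((2*t - s)*(z - b))^2) / (2*D^2)
           = (2*t - s)*(2 - s*(1 - z^2)) / ((1 - z^2)*Q)"
proof -
  define X where "X = 2*t*z*(1 - z^2)/M"
  have bX: "b = z - X"
    using M unfolding b X_def by (simp add: M_def field_simps)
  have "D * M = (1 - z^2) * (M + 2*t*(1 - t)*z^2)"
    using M unfolding D_def bX X_def by (simp add: field_simps power2_eq_square)
  also have "M + 2*t*(1 - t)*z^2 = Q"
    unfolding M_def Q_def by (simp add: algebra_simps power2_eq_square)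
  finally have D: "D = (1 - z^2) * Q / M"
    using M by (simp add: field_simps)
  define Num where "Num = 2*((2*t - s)*D - (2*t - s)*(z - b)*(-b - t*(2*z - b))) - ((2*t - s)*(z - b))^2"
  have "M^2 * Num = 2*(2*t - s)*(1 - z^2)
          * (Q*M + 2*t*(1 + t)*z^2*M - 4*t^2*(1 - t)*z^2*(1 - z^2) - 2*(2*t - s)*t^2*z^2*(1 - z^2))"
    using M unfolding Num_def D bX X_def by (simp add: field_simps power2_eq_square)
  also have "\<dots> = 2*(2*t - s)*(1 - z^2)*Q*(2 - s*(1 - z^2))"
    unfolding Q_def M_def by (simp add: algebra_simps power2_eq_square)
  finally have Num: "M^2 * Num = 2*(2*t - s)*(1 - z^2)*Q*(2 - s*(1 - z^2))" .
  have "N / (2*(w*Q/M)^2) = c*R / (w*Q)" if "M^2 * N = 2*c*w*Q*R" "w \<noteq> 0" for N w c R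
    using that M Q by (simp add: field_simps power2_eq_square)
  from this[OF Num] z show "Num / (2*D^2) = (2*t - s)*(2 - s*(1 - z^2)) / ((1 - z^2)*Q)"
    unfolding D by simp
qed

lemma extremal_parameter_b_bounds:
  fixes s t z :: real
  assumes z: "\<bar>z\<bar> < 1" and K: "2*\<bar>t\<bar>*\<bar>z\<bar> < 2 - s*(1 - z^2)"
  shows "0 < 2 - 2*t*z^2 - s*(1 - z^2)"
    and "\<bar>z*(2 - 2*t - s*(1 - z^2))\<bar> < 2 - 2*t*z^2 - s*(1 - z^2)"
proof -
  have "\<bar>2*t*z\<bar> < 2 - s*(1 - z^2)"
    using K by (simp add: abs_mult)
  then have R: "0 < 2 - s*(1 - z^2) + 2*t*z" "0 < 2 - s*(1 - z^2) - 2*t*z"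
    by linarith+
  have "(2 - 2*t*z^2 - s*(1 - z^2)) - z*(2 - 2*t - s*(1 - z^2)) = (1 - z)*(2 - s*(1 - z^2) + 2*t*z)"
       "(2 - 2*t*z^2 - s*(1 - z^2)) + z*(2 - 2*t - s*(1 - z^2)) = (1 + z)*(2 - s*(1 - z^2) - 2*t*z)"
    by (simp_all add: algebra_simps power2_eq_square)
  moreover have "0 < 1 - z" "0 < 1 + z"
    using z by linarith+
  ultimately have "0 < (2 - 2*t*z^2 - s*(1 - z^2)) - z*(2 - 2*t - s*(1 - z^2))"
                  "0 < (2 - 2*t*z^2 - s*(1 - z^2)) + z*(2 - 2*t - s*(1 - z^2))"
    using R by simp_all
  then show "0 < 2 - 2*t*z^2 - s*(1 - z^2)"
    and "\<bar>z*(2 - 2*t - s*(1 - z^2))\<bar> < 2 - 2*t*z^2 - s*(1 - z^2)"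
    by linarith+
qed

lemma Phi_denominator_factor_pos:
  fixes s t z :: real
  assumes "s < 2" "\<bar>t\<bar> \<le> 1" "\<bar>z\<bar> < 1"
  shows "0 < 2 - s*(1 - z^2) - 2*t^2*z^2"
proof -
  have "0 < 1 - z^2" "t^2 \<le> 1"
    using assms by (simp_all add: abs_square_less_1 abs_square_le_1)
  then have "s*(1 - z^2) < 2*(1 - z^2)" "t^2*z^2 \<le> 1*z^2"
    using assms(1) by (intro mult_strict_right_mono mult_right_mono; simp)+
  then show ?thesis by (simp add: algebra_simps)
qed

(* The inequality says s r^2 - 2|B| r + 2 - s > 0; the roots of this quadratic are \<delta>1 and \<delta>2. *)
lemma sharpness_condition_E1:
  fixes s B r :: real
  assumes "1 - sqrt (1 - B^2) < s" "s < 1 + sqrt (1 - B^2)" "\<bar>B\<bar> \<le> 1"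
  shows "2*\<bar>B\<bar>*r < 2 - s*(1 - r^2)"
proof -
  have "\<bar>s - 1\<bar> < sqrt (1 - B^2)"
    using assms(1,2) by linarith
  then have "(s - 1)^2 < 1 - B^2"
    by (metis real_sqrt_abs real_sqrt_less_iff)
  then have gap: "0 < s*(2 - s) - B^2"
    by (simp add: power2_eq_square algebra_simps)
  then have "0 < s"
    by (smt (verit) mult_nonpos_nonneg zero_le_power2)
  moreover have "s*(2 - s*(1 - r^2) - 2*\<bar>B\<bar>*r) = (s*r - \<bar>B\<bar>)^2 + (s*(2 - s) - B^2)"
    by (simp add: power2_eq_square algebra_simps)
  ultimately show ?thesis
    using gap by (smt (verit) zero_le_power2 zero_less_mult_iff)
qed

lemma sharpness_condition_E2:
  fixes s B r :: real
  assumes "s \<le> \<bar>B\<bar>" "\<bar>B\<bar> \<le> 1" "0 \<le> r" "r < 1"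
  shows "2*\<bar>B\<bar>*r < 2 - s*(1 - r^2)"
proof -
  have "0 \<le> 1 - r^2"
    using assms(3,4) by (simp add: abs_square_le_1)
  then have "s*(1 - r^2) \<le> \<bar>B\<bar>*(1 - r^2)"
    using assms(1) by (simp add: mult_right_mono)
  moreover have "2 - \<bar>B\<bar>*(1 - r^2) - 2*\<bar>B\<bar>*r = \<bar>B\<bar>*(r - 1)^2 + 2*(1 - \<bar>B\<bar>)"
    by (simp add: power2_eq_square algebra_simps)
  moreover have "0 < \<bar>B\<bar>*(r - 1)^2 + 2*(1 - \<bar>B\<bar>)"
    using assms(2,4) by (cases "\<bar>B\<bar> = 1") (auto intro: add_nonneg_pos)
  ultimately show ?thesis by linarith
qed

lemma sharpness_condition_E3:
  fixes s B r :: real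
  defines "d \<equiv> sqrt (B^2 - s*(2 - s))"
  assumes "1 + sqrt (1 - B^2) \<le> s" "\<bar>B\<bar> \<le> 1"
    and r: "r < (\<bar>B\<bar> - d)/s \<or> (\<bar>B\<bar> + d)/s < r"
  shows "2*\<bar>B\<bar>*r < 2 - s*(1 - r^2)"
proof -
  have "0 \<le> 1 - B^2"
    using assms(3) by (simp add: abs_square_le_1)
  then have "sqrt (1 - B^2) \<le> s - 1" "0 \<le> sqrt (1 - B^2)"
    using assms(2) by simp_all
  then have "1 - B^2 \<le> (s - 1)^2" "0 < s"
    using \<open>0 \<le> 1 - B^2\<close> by (metis power_mono real_sqrt_pow2, linarith)
  then have d2: "d^2 = B^2 - s*(2 - s)" and "0 \<le> d"
    unfolding d_def by (simp_all add: power2_eq_square algebra_simps)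
  have "s*(2 - s*(1 - r^2) - 2*\<bar>B\<bar>*r) = (s*r - \<bar>B\<bar>)^2 - d^2"
    unfolding d2 by (simp add: power2_eq_square algebra_simps)
  also have "\<dots> = (s*r - (\<bar>B\<bar> - d)) * (s*r - (\<bar>B\<bar> + d))"
    by (simp add: power2_eq_square algebra_simps)
  also have "0 < \<dots>"
    using r \<open>0 \<le> d\<close> \<open>0 < s\<close>
    by (auto simp: divide_less_eq less_divide_eq mult.commute intro: mult_pos_pos mult_neg_neg)
  finally show ?thesis
    using \<open>0 < s\<close> by (simp add: zero_less_mult_iff)
qed

lemma norm_schwarzian_KAB_at_real:
  fixes A B z0 :: real
  assumes "A \<noteq> 0" "B \<noteq> 0" "\<bar>B\<bar> \<le> 1" "\<bar>z0\<bar> < 1" and sign: "B*z0 \<le> 0"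
  shows "cmod (schwarzian (KAB A B) (of_real z0)) = \<bar>A^2 - B^2\<bar> / (2*(1 - \<bar>B\<bar>*\<bar>z0\<bar>)^2)"
proof -
  have "schwarzian (KAB A B) (of_real z0) = of_real (- (A^2 - B^2) / (2*(1 + B*z0)^2))"
    using schwarzian_KAB[of A B "of_real z0"] assms by simp
  moreover have "1 + B*z0 = 1 - \<bar>B\<bar>*\<bar>z0\<bar>"
    using sign by (simp flip: abs_mult)
  ultimately show ?thesis
    by (simp only: norm_of_real) (simp add: abs_divide abs_minus_commute)
qed

lemma sharpness_condition:
  fixes A B z0 :: real
  assumes AB: "(A, B) \<in> E1 \<union> E2 \<or> ((A, B) \<in> E3 \<and> complex_of_real z0 \<in> Sset A B)"
    and z0: "\<bar>z0\<bar> < 1"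
  shows "2*\<bar>B\<bar>*\<bar>z0\<bar> < 2 - \<bar>A + B\<bar>*(1 - z0^2)"
proof -
  have B: "\<bar>B\<bar> \<le> 1"
    using AB by (auto simp: E1_def E2_def E3_def Eset_def)
  from AB consider "(A, B) \<in> E1" | "(A, B) \<in> E2" | "(A, B) \<in> E3" "complex_of_real z0 \<in> Sset A B"
    by blast
  then have "2*\<bar>B\<bar>*\<bar>z0\<bar> < 2 - \<bar>A + B\<bar>*(1 - \<bar>z0\<bar>^2)"
  proof cases
    case 1
    then show ?thesis
      using sharpness_condition_E1[of B "\<bar>A + B\<bar>" "\<bar>z0\<bar>"] B by (auto simp: E1_def)
  next
    case 2
    then show ?thesis
      using sharpness_condition_E2[of "\<bar>A + B\<bar>" B "\<bar>z0\<bar>"] B z0 by (auto simp: E2_def)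
  next
    case 3
    then show ?thesis
      using sharpness_condition_E3[of B "\<bar>A + B\<bar>" "\<bar>z0\<bar>"] B
      by (auto simp: E3_def Sset_def delta1_def delta2_def)
  qed
  then show ?thesis
    by simp
qed

lemma extremal_function_sharp_at_real:
  fixes A B z0 :: real
  assumes AB: "-1 \<le> B" "B < A" "A \<le> 1" and z0: "\<bar>z0\<bar> < 1"
    and K: "2*\<bar>B\<bar>*\<bar>z0\<bar> < 2 - \<bar>A + B\<bar>*(1 - z0^2)"
  shows "par_b A B z0 \<in> {-1<..<1}
         \<and> (\<exists>f\<in>classC A B.
              (\<forall>z\<in>ball 0 1. 1 + z * deriv (deriv f) z / deriv f z
                  = (1 + of_real A * ext_phi A B z0 z) / (1 + of_real B * ext_phi A B z0 z))
              \<and> cmod (schwarzian f (complex_of_real z0)) = Phi A B (complex_of_real z0))"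
proof -
  define p s t b where "p = par_p A B" and "s = \<bar>A + B\<bar>" and "t = par_q A B * \<bar>B\<bar>" and "b = par_b A B z0"
  have p: "\<bar>p\<bar> = 1" and s: "s = -p*(A + B)" and t: "t = -p*B"
    using AB by (auto simp: p_def s_def t_def par_p_def par_q_def)
  then have c: "2*t - s = p*(A - B)" and tB: "\<bar>t\<bar> = \<bar>B\<bar>"
    by (auto simp: algebra_simps abs_mult)
  define M Q where "M = 2 - 2*t*z0^2 - s*(1 - z0^2)" and "Q = 2 - s*(1 - z0^2) - 2*t^2*z0^2"
  have "2*\<bar>t\<bar>*\<bar>z0\<bar> < 2 - s*(1 - z0^2)"
    using K tB by (simp add: s_def)
  from extremal_parameter_b_bounds[OF z0 this]
  have M: "0 < M" and bM: "\<bar>z0*(2 - 2*t - s*(1 - z0^2))\<bar> < M"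
    by (simp_all add: M_def)
  have b: "b = z0*(2 - 2*t - s*(1 - z0^2)) / M"
    by (simp add: b_def par_b_def M_def s_def t_def mult.assoc)
  then have b1: "\<bar>b\<bar> < 1"
    using M bM by (simp add: abs_divide divide_less_eq)
  have "0 < Q"
    unfolding Q_def using Phi_denominator_factor_pos[OF _ _ z0] AB tB by (simp add: s_def)
  have B1: "\<bar>B\<bar> \<le> 1"
    using AB by linarith
  obtain f where f: "f \<in> classC A B"
    and ident: "\<forall>z\<in>ball 0 1. 1 + z * deriv (deriv f) z / deriv f z
          = (1 + of_real A * (of_real p * z * (z - of_real b) / (1 - of_real b * z)))
          / (1 + of_real B * (of_real p * z * (z - of_real b) / (1 - of_real b * z)))"
    and Sf: "schwarzian f (of_real z0) = of_real ((2*((2*t - s)*(1 - b*z0 - t*z0*(z0 - b))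
                - (2*t - s)*(z0 - b)*(-b - t*(2*z0 - b))) - ((2*t - s)*(z0 - b))^2)
                / (2*(1 - b*z0 - t*z0*(z0 - b))^2))"
    using extremal_schwarzian_at_real[OF c t b1 B1 _ z0] p by auto
  have z0_sq: "z0^2 \<noteq> 1"
    using z0 by (simp add: abs_square_eq_1)
  have "schwarzian f (of_real z0) = of_real ((2*t - s)*(2 - s*(1 - z0^2)) / ((1 - z0^2)*Q))"
    unfolding Sf using M \<open>0 < Q\<close>
    by (simp only: extremal_pre_schwarzian_value[of t z0 s b, folded M_def Q_def, OF _ z0_sq _ b])
  moreover have "Phi A B (of_real z0) = (A - B)*(2 - s*(1 - z0^2)) / ((1 - z0^2)*Q)"
    using tB by (simp add: Phi_def Q_def s_def power2_abs flip: power2_abs[of t])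
  moreover have "\<bar>2*t - s\<bar> = A - B"
    using c p AB by (simp add: abs_mult)
  moreover have "0 < 2 - s*(1 - z0^2)"
    using \<open>0 < Q\<close> unfolding Q_def by (smt (verit) zero_le_mult_iff zero_le_power2)
  moreover have "0 < 1 - z0^2"
    using z0 by (simp add: abs_square_less_1)
  ultimately have "cmod (schwarzian f (of_real z0)) = Phi A B (of_real z0)"
    using \<open>0 < Q\<close> by (simp only: norm_of_real) (simp add: abs_divide abs_mult)
  moreover have "ext_phi A B z0 = (\<lambda>z. of_real p * z * (z - of_real b) / (1 - of_real b * z))"
    by (simp add: ext_phi_def p_def b_def fun_eq_iff)
  ultimately show ?thesis
    using b1 f ident unfolding b_def by auto
qed

theorem mainTheorem2:
  fixes A B z0 :: real
  assumes hB: "-1 \<le> B" and hBA: "B < A" and hA: "A \<le> 1"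
    and hz0: "-1 < z0" "z0 < 1"
  shows
    "(((A, B) \<in> E1 \<union> E2 \<or> ((A, B) \<in> E3 \<and> complex_of_real z0 \<in> Sset A B)) \<longrightarrow>
        par_b A B z0 \<in> {-1<..<1}
        \<and> (\<exists>f\<in>classC A B.
              (\<forall>z\<in>ball 0 1. 1 + z * deriv (deriv f) z / deriv f z
                  = (1 + of_real A * ext_phi A B z0 z) / (1 + of_real B * ext_phi A B z0 z))
              \<and> cmod (schwarzian f (complex_of_real z0)) = Phi A B (complex_of_real z0)))
     \<and>
     (((A, B) \<in> E3 \<and> complex_of_real z0 \<notin> Sset A B \<and>
        ((B > 0 \<and> z0 \<le> 0) \<or> (B < 0 \<and> z0 \<ge> 0))) \<longrightarrow>
        cmod (schwarzian (KAB A B) (complex_of_real z0))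
          = \<bar>A^2 - B^2\<bar> / (2 * (1 - \<bar>B\<bar> * \<bar>z0\<bar>)^2))"
proof -
  have z0: "\<bar>z0\<bar> < 1" and B: "\<bar>B\<bar> \<le> 1"
    using hz0 hB hBA hA by linarith+
  have KAB_case: "A \<noteq> 0 \<and> B \<noteq> 0 \<and> B*z0 \<le> 0"
    if "(A, B) \<in> E3" "(B > 0 \<and> z0 \<le> 0) \<or> (B < 0 \<and> z0 \<ge> 0)"
    using that by (auto simp: E3_def mult_nonneg_nonpos mult_nonpos_nonneg)
  show ?thesis
    using extremal_function_sharp_at_real[OF hB hBA hA z0] sharpness_condition[OF _ z0]
      KAB_case norm_schwarzian_KAB_at_real[OF _ _ B z0] by blast
qed

end
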